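(* Let $n\in\mathbb N$ with $n\ge 10$ and let $T_n$ be a tree on $n$ vertices with $\Delta(T_n)=n-4$. Suppose that for every integer $m\ge n$ and every connected graph $H\in\mathrm{Ex}(m;T_n)$ we have $\Delta(H)\le n-4$. Let $p=k(n-1)+r\ge n-1$ with $k\in\mathbb N$ and $r\in\{0,1,\ldots,n-2\}$. Then $$\frac{(n-2)p-r(n-1-r)}2\le\mathrm{ex}(p;T_n)\le\frac{(n-2)p}2-\min\Big\{n-1+r,\ \frac{r(n-1-r)}2\Big\}.$$ Consequently, for $r\in\{0,1,2,n-5,n-4,n-3,n-2\}$ we have $\mathrm{ex}(p;T_n)=\frac{(n-2)p-r(n-1-r)}2$.
   Context: All graphs are finite simple graphs; $\Delta(G)$ is the maximum degree of $G$. For a graph $L$, $\mathrm{ex}(p;L)$ is the maximum number of edges in a graph on $p$ vertices containing no subgraph isomorphic to $L$, and $\mathrm{Ex}(p;L)$ is the set of graphs on $p$ vertices containing no copy of $L$ and having exactly $\mathrm{ex}(p;L)$ edges. *)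

theory Defs
  imports Complex_Main
begin

definition simple_graph :: "'a set \<Rightarrow> 'a set set \<Rightarrow> bool" where
  "simple_graph V E \<longleftrightarrow> finite V \<and>
     (\<forall>e\<in>E. \<exists>x y. x \<in> V \<and> y \<in> V \<and> x \<noteq> y \<and> e = {x, y})"

definition degree :: "'a set \<Rightarrow> 'a set set \<Rightarrow> 'a \<Rightarrow> nat" where
  "degree V E v = card {u \<in> V. {u, v} \<in> E}"

definition max_degree :: "'a set \<Rightarrow> 'a set set \<Rightarrow> nat" where
  "max_degree V E = Max (degree V E ` V)"

definition connected_graph :: "'a set \<Rightarrow> 'a set set \<Rightarrow> bool" where
  "connected_graph V E \<longleftrightarrow> V \<noteq> {} \<and>
     (\<forall>u\<in>V. \<forall>v\<in>V. (\<lambda>x y. {x, y} \<in> E)\<^sup>*\<^sup>* u v)"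

definition is_tree :: "'a set \<Rightarrow> 'a set set \<Rightarrow> bool" where
  "is_tree V E \<longleftrightarrow> simple_graph V E \<and> connected_graph V E \<and> card E = card V - 1"

definition contains_copy :: "'a set \<Rightarrow> 'a set set \<Rightarrow> 'b set \<Rightarrow> 'b set set \<Rightarrow> bool" where
  "contains_copy V E VL EL \<longleftrightarrow>
     (\<exists>f. inj_on f VL \<and> f ` VL \<subseteq> V \<and> (\<forall>e\<in>EL. f ` e \<in> E))"

text \<open>Graphs on p vertices are taken (up to isomorphism) with vertex set {0..<p}.\<close>
definition L_free_graphs :: "nat \<Rightarrow> 'b set \<Rightarrow> 'b set set \<Rightarrow> nat set set set" where
  "L_free_graphs p VL EL =
     {E. simple_graph {0..<p} E \<and> \<not> contains_copy {0..<p} E VL EL}"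

definition ex :: "nat \<Rightarrow> 'b set \<Rightarrow> 'b set set \<Rightarrow> nat" where
  "ex p VL EL = Max (card ` L_free_graphs p VL EL)"

definition Ex :: "nat \<Rightarrow> 'b set \<Rightarrow> 'b set set \<Rightarrow> nat set set set" where
  "Ex p VL EL = {E \<in> L_free_graphs p VL EL. card E = ex p VL EL}"

end

theory Submission
  imports Defs
begin

text \<open>
  The lower bound comes from the disjoint union of \<open>k\<close> cliques on \<open>n - 1\<close> vertices and one
  clique on \<open>r\<close> vertices: a copy of the connected tree \<open>T\<^sub>n\<close> would lie inside a single clique,
  which has fewer than \<open>n\<close> vertices.

  For the upper bound, sum the deficits \<open>(n - 2) - deg v\<close> over an extremal graph \<open>G\<close> on \<open>p\<close>
  vertices; they add up to \<open>(n - 2) p - 2 e(G)\<close>. A component with \<open>c \<le> n - 1\<close> vertices has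
  all degrees below \<open>c\<close>, so it contributes at least \<open>c (n - 1 - c)\<close>. A component with
  \<open>c \<ge> n\<close> vertices is itself extremal on \<open>c\<close> vertices (otherwise replacing it by a denser
  \<open>T\<^sub>n\<close>-free graph would improve \<open>G\<close>, because \<open>T\<^sub>n\<close> is connected) and connected, so by
  hypothesis it contributes at least \<open>2 c\<close>. Since the component sizes add up to
  \<open>p \<equiv> r (mod n - 1)\<close> and \<open>c (n - 1 - c)\<close> is subadditive modulo \<open>n - 1\<close>, the total deficit
  is at least \<open>min (2 (n - 1 + r)) (r (n - 1 - r))\<close>. For the listed values of \<open>r\<close> this
  minimum is \<open>r (n - 1 - r)\<close>, and the two bounds meet.
\<close>

lemma simple_graph_edges_subset: "simple_graph V E \<Longrightarrow> e \<in> E \<Longrightarrow> e \<subseteq> V"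
  unfolding simple_graph_def by fastforce

lemma simple_graph_finite_edges: "simple_graph V E \<Longrightarrow> finite E"
  by (rule finite_subset[of _ "Pow V"])
     (auto simp: simple_graph_def dest: simple_graph_edges_subset)

lemma simple_graph_edgeE:
  assumes "simple_graph V E" "e \<in> E"
  obtains a b where "a \<in> V" "b \<in> V" "a \<noteq> b" "e = {a, b}"
  using assms unfolding simple_graph_def by auto

lemma simple_graph_edge_nonempty: "simple_graph V E \<Longrightarrow> e \<in> E \<Longrightarrow> e \<noteq> {}"
  by (erule simple_graph_edgeE) auto

lemma simple_graph_adjacent:
  "simple_graph V E \<Longrightarrow> {x, y} \<in> E \<Longrightarrow> x \<in> V \<and> y \<in> V \<and> x \<noteq> y"
  by (erule simple_graph_edgeE) (auto simp: doubleton_eq_iff)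

lemma simple_graph_subset_edges: "simple_graph V E \<Longrightarrow> E' \<subseteq> E \<Longrightarrow> simple_graph V E'"
  unfolding simple_graph_def by (meson subsetD)

lemma simple_graph_Un:
  "simple_graph V E \<Longrightarrow> simple_graph W E' \<Longrightarrow> W \<subseteq> V \<Longrightarrow> simple_graph V (E \<union> E')"
  unfolding simple_graph_def by (metis Un_iff subsetD)

lemma degree_eq_card_incident_edges:
  assumes G: "simple_graph V E"
  shows "degree V E v = card {e \<in> E. v \<in> e}"
  unfolding degree_def
proof (rule bij_betw_same_card[where f = "\<lambda>u. {u, v}"], rule bij_betw_imageI)
  show "inj_on (\<lambda>u. {u, v}) {u \<in> V. {u, v} \<in> E}"
    by (auto intro!: inj_onI simp: doubleton_eq_iff)
  show "(\<lambda>u. {u, v}) ` {u \<in> V. {u, v} \<in> E} = {e \<in> E. v \<in> e}"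
  proof (intro equalityI subsetI)
    fix e assume "e \<in> {e \<in> E. v \<in> e}"
    then obtain a b where "a \<in> V" "b \<in> V" "e = {a, b}" "v \<in> e" "e \<in> E"
      using simple_graph_edgeE[OF G] by blast
    then show "e \<in> (\<lambda>u. {u, v}) ` {u \<in> V. {u, v} \<in> E}"
      by (auto simp: insert_commute intro: image_eqI[of _ _ b] image_eqI[of _ _ a])
  qed auto
qed

lemma handshake:
  assumes G: "simple_graph V E"
  shows "(\<Sum>v\<in>V. degree V E v) = 2 * card E"
proof -
  have "(\<Sum>v\<in>V. degree V E v) = (\<Sum>v\<in>V. \<Sum>e\<in>E. if v \<in> e then 1 else 0)"
    using simple_graph_finite_edges[OF G]
    by (simp add: degree_eq_card_incident_edges[OF G] sum.If_cases Int_def)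
  also have "\<dots> = (\<Sum>e\<in>E. \<Sum>v\<in>V. if v \<in> e then 1 else 0)"
    by (rule sum.swap)
  also have "\<dots> = (\<Sum>e\<in>E. 2)"
  proof (rule sum.cong[OF refl])
    fix e assume "e \<in> E"
    then obtain a b where "a \<in> V" "b \<in> V" "a \<noteq> b" "e = {a, b}"
      using simple_graph_edgeE[OF G] by blast
    moreover have "finite V" using G by (simp add: simple_graph_def)
    ultimately have "(\<Sum>v\<in>V. if v \<in> e then 1 else 0) = card (V \<inter> {a, b})"
      by (simp add: sum.If_cases Int_def)
    also have "V \<inter> {a, b} = {a, b}" using \<open>a \<in> V\<close> \<open>b \<in> V\<close> by blast
    finally show "(\<Sum>v\<in>V. if v \<in> e then 1 else 0) = (2::nat)"
      using \<open>a \<noteq> b\<close> by simp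
  qed
  finally show ?thesis by simp
qed

lemma degree_le_max_degree: "finite V \<Longrightarrow> v \<in> V \<Longrightarrow> degree V E v \<le> max_degree V E"
  unfolding max_degree_def by (intro Max_ge) auto

lemma connected_graph_invariant:
  assumes "connected_graph V E" "u \<in> V" "w \<in> V"
    and "\<And>x y. {x, y} \<in> E \<Longrightarrow> g x = g y"
  shows "g u = g w"
proof -
  have "(\<lambda>x y. {x, y} \<in> E)\<^sup>*\<^sup>* u w"
    using assms(1-3) unfolding connected_graph_def by blast
  then show ?thesis
    by (induction rule: rtranclp_induct) (auto dest: assms(4))
qed

definition map_edges :: "('a \<Rightarrow> 'b) \<Rightarrow> 'a set set \<Rightarrow> 'b set set" where
  "map_edges h E = image h ` E"

lemma simple_graph_map_edges:
  assumes "simple_graph V E" "inj_on h V"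
  shows "simple_graph (h ` V) (map_edges h E)"
  unfolding simple_graph_def map_edges_def
proof (intro conjI ballI)
  show "finite (h ` V)" using assms(1) by (simp add: simple_graph_def)
next
  fix e' assume "e' \<in> image h ` E"
  then obtain e where "e \<in> E" "e' = h ` e" by blast
  then obtain a b where "a \<in> V" "b \<in> V" "a \<noteq> b" "e' = {h a, h b}"
    using simple_graph_edgeE[OF assms(1)] by (metis image_empty image_insert)
  moreover have "h a \<noteq> h b" using calculation assms(2) by (metis inj_on_contraD)
  ultimately show "\<exists>x y. x \<in> h ` V \<and> y \<in> h ` V \<and> x \<noteq> y \<and> e' = {x, y}" by blast
qed

lemma card_map_edges:
  assumes "simple_graph V E" "inj_on h V"
  shows "card (map_edges h E) = card E"
  unfolding map_edges_def
  by (rule card_image, rule inj_on_subset[OF inj_on_image_Pow[OF assms(2)]])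
     (use simple_graph_edges_subset[OF assms(1)] in blast)

lemma map_edges_inv_into:
  assumes "simple_graph V E" "inj_on h V"
  shows "map_edges (inv_into V h) (map_edges h E) = E"
proof -
  have "inv_into V h ` h ` e = e" if "e \<in> E" for e
    using simple_graph_edges_subset[OF assms(1) that] assms(2)
    by (metis inv_into_image_cancel)
  then show ?thesis by (force simp: map_edges_def image_image)
qed

lemma degree_map_edges:
  assumes G: "simple_graph V E" and h: "inj_on h V" and v: "v \<in> V"
  shows "degree (h ` V) (map_edges h E) (h v) = degree V E v"
proof -
  have "{u \<in> h ` V. {u, h v} \<in> map_edges h E} = h ` {u \<in> V. {u, v} \<in> E}"
  proof (intro equalityI subsetI)
    fix u assume "u \<in> {u \<in> h ` V. {u, h v} \<in> map_edges h E}"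
    then obtain a e where a: "a \<in> V" "u = h a" and e: "e \<in> E" "h ` {a, v} = h ` e"
      by (auto simp: map_edges_def)
    have "{a, v} \<subseteq> V" "e \<subseteq> V" using a(1) v simple_graph_edges_subset[OF G e(1)] by auto
    then have "{a, v} = e" using inj_on_image_eq_iff[OF h] e(2) by blast
    with a e(1) show "u \<in> h ` {u \<in> V. {u, v} \<in> E}" by blast
  next
    fix u assume "u \<in> h ` {u \<in> V. {u, v} \<in> E}"
    then obtain a where "a \<in> V" "{a, v} \<in> E" "u = h a" by blast
    moreover have "{h a, h v} = h ` {a, v}" by simp
    ultimately show "u \<in> {u \<in> h ` V. {u, h v} \<in> map_edges h E}"
      unfolding map_edges_def by (metis (mono_tags, lifting) image_eqI mem_Collect_eq)
  qed
  moreover have "inj_on h {u \<in> V. {u, v} \<in> E}" using h by (rule inj_on_subset) blast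
  ultimately show ?thesis unfolding degree_def by (simp add: card_image)
qed

lemma connected_graph_map_edges:
  assumes "connected_graph V E"
  shows "connected_graph (h ` V) (map_edges h E)"
proof -
  have path: "(\<lambda>x y. {x, y} \<in> map_edges h E)\<^sup>*\<^sup>* (h x) (h y)"
    if "(\<lambda>x y. {x, y} \<in> E)\<^sup>*\<^sup>* x y" for x y
    using that
  proof (induction rule: rtranclp_induct)
    case (step y z)
    have "{h y, h z} = h ` {y, z}" by simp
    then have "{h y, h z} \<in> map_edges h E"
      unfolding map_edges_def using step.hyps(2) by (metis image_eqI)
    with step.IH show ?case by (rule rtranclp.rtrancl_into_rtrancl)
  qed simp
  show ?thesis
    unfolding connected_graph_def
  proof (intro conjI ballI)
    show "h ` V \<noteq> {}" using assms by (simp add: connected_graph_def)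
  next
    fix u' w' assume "u' \<in> h ` V" "w' \<in> h ` V"
    then obtain u w where "u \<in> V" "w \<in> V" "u' = h u" "w' = h w" by blast
    then show "(\<lambda>x y. {x, y} \<in> map_edges h E)\<^sup>*\<^sup>* u' w'"
      using assms path unfolding connected_graph_def by blast
  qed
qed

lemma contains_copy_hom:
  assumes "contains_copy V E VL EL" "inj_on h V" "h ` V \<subseteq> V'"
    and "\<And>e. e \<in> E \<Longrightarrow> h ` e \<in> E'"
  shows "contains_copy V' E' VL EL"
proof -
  obtain f where f: "inj_on f VL" "f ` VL \<subseteq> V" "\<forall>e\<in>EL. f ` e \<in> E"
    using assms(1) unfolding contains_copy_def by blast
  have "inj_on (h \<circ> f) VL"
    using f(1,2) assms(2) by (blast intro: comp_inj_on inj_on_subset)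
  moreover have "(h \<circ> f) ` VL \<subseteq> V'"
    using f(2) assms(3) by (metis image_comp image_mono order_trans)
  moreover have "(h \<circ> f) ` e \<in> E'" if "e \<in> EL" for e
    using that f(3) assms(4) by (metis image_comp)
  ultimately show ?thesis unfolding contains_copy_def by blast
qed

lemma contains_copy_map_edges_iff:
  assumes "simple_graph V E" "inj_on h V"
  shows "contains_copy (h ` V) (map_edges h E) VL EL \<longleftrightarrow> contains_copy V E VL EL"
proof
  assume "contains_copy (h ` V) (map_edges h E) VL EL"
  then show "contains_copy V E VL EL"
    using map_edges_inv_into[OF assms] assms(2)
    by (elim contains_copy_hom[where h = "inv_into V h"])
       (auto simp: inj_on_inv_into map_edges_def)
next
  assume "contains_copy V E VL EL"
  then show "contains_copy (h ` V) (map_edges h E) VL EL"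
    using assms(2) by (elim contains_copy_hom) (auto simp: map_edges_def)
qed

definition component :: "'a set set \<Rightarrow> 'a \<Rightarrow> 'a set" where
  "component E v = {u. (\<lambda>x y. {x, y} \<in> E)\<^sup>*\<^sup>* v u}"

definition induced_edges :: "'a set set \<Rightarrow> 'a set \<Rightarrow> 'a set set" where
  "induced_edges E C = {e \<in> E. e \<subseteq> C}"

lemma in_component_self [simp]: "v \<in> component E v"
  by (simp add: component_def)

lemma in_component_edge: "x \<in> component E v \<Longrightarrow> {x, y} \<in> E \<Longrightarrow> y \<in> component E v"
  unfolding component_def by (auto intro: rtranclp.rtrancl_into_rtrancl)

lemma in_component_edge': "x \<in> component E v \<Longrightarrow> {y, x} \<in> E \<Longrightarrow> y \<in> component E v"
  by (simp add: in_component_edge insert_commute)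

lemma symp_adjacent: "symp (\<lambda>x y. {x, y} \<in> E)"
  by (auto intro: sympI simp: insert_commute)

lemma component_eq:
  assumes "u \<in> component E v"
  shows "component E u = component E v"
proof -
  have "(\<lambda>x y. {x, y} \<in> E)\<^sup>*\<^sup>* v u" using assms by (simp add: component_def)
  then have "(\<lambda>x y. {x, y} \<in> E)\<^sup>*\<^sup>* u v"
    using symp_rtranclp[OF symp_adjacent] by (rule sympD[rotated])
  with assms show ?thesis
    unfolding component_def by (auto intro: rtranclp_trans)
qed

lemma component_subset:
  assumes G: "simple_graph V E" and "v \<in> V"
  shows "component E v \<subseteq> V"
proof
  fix u assume "u \<in> component E v"
  then have "(\<lambda>x y. {x, y} \<in> E)\<^sup>*\<^sup>* v u" by (simp add: component_def)
  then show "u \<in> V"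
    by (induction rule: rtranclp_induct) (use \<open>v \<in> V\<close> simple_graph_adjacent[OF G] in auto)
qed

lemma edge_inside_or_outside_component:
  assumes "simple_graph V E" "e \<in> E"
  shows "e \<subseteq> component E v \<or> e \<inter> component E v = {}"
proof -
  obtain a b where "e = {a, b}" using simple_graph_edgeE[OF assms] by metis
  with assms(2) show ?thesis using in_component_edge in_component_edge' by auto
qed

lemma simple_graph_induced_edges:
  assumes "simple_graph V E" "C \<subseteq> V"
  shows "simple_graph C (induced_edges E C)"
  unfolding simple_graph_def
proof (intro conjI ballI)
  show "finite C" using assms finite_subset by (auto simp: simple_graph_def)
next
  fix e assume e: "e \<in> induced_edges E C"
  then obtain x y where "x \<noteq> y" "e = {x, y}"
    using simple_graph_edgeE[OF assms(1)]
    by (metis (no_types, lifting) induced_edges_def mem_Collect_eq)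
  with e show "\<exists>x y. x \<in> C \<and> y \<in> C \<and> x \<noteq> y \<and> e = {x, y}"
    by (auto simp: induced_edges_def)
qed

lemma connected_component:
  assumes "simple_graph V E" "v \<in> V"
  shows "connected_graph (component E v) (induced_edges E (component E v))"
proof -
  let ?C = "component E v"
  have path: "(\<lambda>x y. {x, y} \<in> induced_edges E ?C)\<^sup>*\<^sup>* v u" if "u \<in> ?C" for u
  proof -
    have "(\<lambda>x y. {x, y} \<in> E)\<^sup>*\<^sup>* v u" using that by (simp add: component_def)
    then show ?thesis
    proof (induction rule: rtranclp_induct)
      case (step y z)
      have "y \<in> ?C" "z \<in> ?C"
        using step.hyps by (auto simp: component_def intro: rtranclp.rtrancl_into_rtrancl)
      with step show ?case
        by (auto simp: induced_edges_def intro: rtranclp.rtrancl_into_rtrancl)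
    qed simp
  qed
  have "(\<lambda>x y. {x, y} \<in> induced_edges E ?C)\<^sup>*\<^sup>* u w" if "u \<in> ?C" "w \<in> ?C" for u w
  proof -
    have "(\<lambda>x y. {x, y} \<in> induced_edges E ?C)\<^sup>*\<^sup>* u v"
      using symp_rtranclp[OF symp_adjacent] path[OF that(1)] by (rule sympD)
    then show ?thesis using path[OF that(2)] by (rule rtranclp_trans)
  qed
  then show ?thesis unfolding connected_graph_def using in_component_self[of v E] by blast
qed

lemma degree_induced_component:
  assumes G: "simple_graph V E" and "v \<in> V"
  shows "degree (component E v) (induced_edges E (component E v)) v = degree V E v"
proof -
  have "{u \<in> component E v. {u, v} \<in> induced_edges E (component E v)} = {u \<in> V. {u, v} \<in> E}"
    using component_subset[OF assms] in_component_edge'[of v E v]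
    by (auto simp: induced_edges_def)
  then show ?thesis unfolding degree_def by simp
qed

lemma degree_le_card_component:
  assumes G: "simple_graph V E" and "v \<in> V"
  shows "degree V E v \<le> card (component E v) - 1"
proof -
  have fin: "finite (component E v)"
    using component_subset[OF assms] G finite_subset by (auto simp: simple_graph_def)
  have "{u \<in> V. {u, v} \<in> E} \<subseteq> component E v - {v}"
    using simple_graph_adjacent[OF G] in_component_edge'[of v E v] by auto
  then have "degree V E v \<le> card (component E v - {v})"
    unfolding degree_def using fin by (intro card_mono) auto
  then show ?thesis by simp
qed

lemma sum_over_components:
  assumes G: "simple_graph V E"
  shows "(\<Sum>v\<in>V. f v) = (\<Sum>C\<in>component E ` V. \<Sum>v\<in>C. f v)"
proof -
  have "finite V" using G by (simp add: simple_graph_def)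
  then have "(\<Sum>v\<in>V. f v) = (\<Sum>C\<in>component E ` V. \<Sum>v\<in>{x \<in> V. component E x = C}. f v)"
    by (rule sum.image_gen)
  also have "\<dots> = (\<Sum>C\<in>component E ` V. \<Sum>v\<in>C. f v)"
  proof (rule sum.cong[OF refl])
    fix C assume "C \<in> component E ` V"
    then obtain v where v: "v \<in> V" "C = component E v" by blast
    have "{x \<in> V. component E x = C} = C"
    proof (intro equalityI subsetI)
      fix x assume "x \<in> C"
      then have "component E x = C" "x \<in> V"
        using v component_eq[of x E v] component_subset[OF G v(1)] by auto
      then show "x \<in> {x \<in> V. component E x = C}" by simp
    next
      fix x assume "x \<in> {x \<in> V. component E x = C}"
      then show "x \<in> C" using in_component_self[of x E] by simp
    qed
    then show "(\<Sum>v\<in>{x \<in> V. component E x = C}. f v) = (\<Sum>v\<in>C. f v)" by simp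
  qed
  finally show ?thesis .
qed

lemma finite_L_free_graphs: "finite (L_free_graphs p VL EL)"
  by (rule finite_subset[of _ "Pow (Pow {0..<p})"])
     (auto simp: L_free_graphs_def dest: simple_graph_edges_subset)

lemma empty_in_L_free_graphs: "EL \<noteq> {} \<Longrightarrow> {} \<in> L_free_graphs p VL EL"
  unfolding L_free_graphs_def contains_copy_def simple_graph_def by auto

lemma card_le_ex: "E \<in> L_free_graphs p VL EL \<Longrightarrow> card E \<le> ex p VL EL"
  unfolding ex_def by (simp add: finite_L_free_graphs)

lemma Ex_nonempty:
  assumes "L_free_graphs p VL EL \<noteq> {}"
  obtains E where "E \<in> Ex p VL EL"
proof -
  have "ex p VL EL \<in> card ` L_free_graphs p VL EL"
    unfolding ex_def using assms finite_L_free_graphs by (intro Max_in) auto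
  then show ?thesis using that by (auto simp: Ex_def)
qed

lemma Ex_iff_card_ge:
  "E \<in> Ex p VL EL \<longleftrightarrow> E \<in> L_free_graphs p VL EL \<and> ex p VL EL \<le> card E"
  using card_le_ex by (force simp: Ex_def)

lemma contains_copy_inside_or_outside:
  assumes copy: "contains_copy V E VL EL" and L: "connected_graph VL EL" "simple_graph VL EL"
    and closed: "\<And>e. e \<in> E \<Longrightarrow> e \<subseteq> C \<or> e \<inter> C = {}"
  shows "contains_copy C (induced_edges E C) VL EL \<or> contains_copy V {e \<in> E. e \<inter> C = {}} VL EL"
proof -
  obtain f where f: "inj_on f VL" "f ` VL \<subseteq> V" "\<forall>e\<in>EL. f ` e \<in> E"
    using copy unfolding contains_copy_def by blast
  obtain w where w: "w \<in> VL" using L(1) unfolding connected_graph_def by blast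
  have "f u \<in> C \<longleftrightarrow> f w \<in> C" if "u \<in> VL" for u
  proof (rule connected_graph_invariant[OF L(1) that w])
    fix x y assume "{x, y} \<in> EL"
    then have "{f x, f y} \<in> E" using f(3) by force
    then have "{f x, f y} \<subseteq> C \<or> {f x, f y} \<inter> C = {}" by (rule closed)
    then show "(f x \<in> C) = (f y \<in> C)" by auto
  qed
  then consider "f ` VL \<subseteq> C" | "f ` VL \<inter> C = {}" by blast
  then show ?thesis
  proof cases
    case 1
    have "f ` e \<subseteq> C" if "e \<in> EL" for e
      using 1 image_mono[OF simple_graph_edges_subset[OF L(2) that], of f] by blast
    then have "\<forall>e\<in>EL. f ` e \<in> induced_edges E C" using f(3) by (simp add: induced_edges_def)
    then show ?thesis using f(1) 1 unfolding contains_copy_def by blast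
  next
    case 2
    have "f ` e \<inter> C = {}" if "e \<in> EL" for e
      using 2 image_mono[OF simple_graph_edges_subset[OF L(2) that], of f] by blast
    then have "\<forall>e\<in>EL. f ` e \<in> {e \<in> E. e \<inter> C = {}}" using f(3) by blast
    then show ?thesis using f(1,2) unfolding contains_copy_def by blast
  qed
qed

lemma replace_closed_part_L_free:
  assumes E: "E \<in> L_free_graphs p VL EL" and L: "connected_graph VL EL" "simple_graph VL EL"
    and C: "C \<subseteq> {0..<p}" and closed: "\<And>e. e \<in> E \<Longrightarrow> e \<subseteq> C \<or> e \<inter> C = {}"
    and g: "bij_betw g {0..<m} C" and H: "H \<in> L_free_graphs m VL EL"
  shows "(E - induced_edges E C) \<union> map_edges g H \<in> L_free_graphs p VL EL"
proof -
  let ?E' = "(E - induced_edges E C) \<union> map_edges g H"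
  have sgE: "simple_graph {0..<p} E" and freeE: "\<not> contains_copy {0..<p} E VL EL"
    using E by (auto simp: L_free_graphs_def)
  have sgH: "simple_graph {0..<m} H" and freeH: "\<not> contains_copy {0..<m} H VL EL"
    using H by (auto simp: L_free_graphs_def)
  have g_inj: "inj_on g {0..<m}" and gC: "g ` {0..<m} = C"
    using g by (auto simp: bij_betw_def)
  have sgH': "simple_graph C (map_edges g H)"
    using simple_graph_map_edges[OF sgH g_inj] gC by simp
  have "simple_graph {0..<p} (E - induced_edges E C)"
    using sgE by (rule simple_graph_subset_edges) blast
  then have sgE': "simple_graph {0..<p} ?E'" using sgH' C by (rule simple_graph_Un)
  have H'C: "e \<subseteq> C" "e \<inter> C \<noteq> {}" if "e \<in> map_edges g H" for e
    using simple_graph_edges_subset[OF sgH' that] simple_graph_edge_nonempty[OF sgH' that]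
    by auto
  have closed': "e \<subseteq> C \<or> e \<inter> C = {}" if "e \<in> ?E'" for e
    using that closed[of e] H'C(1)[of e] by blast
  have "\<not> contains_copy {0..<p} ?E' VL EL"
  proof
    assume "contains_copy {0..<p} ?E' VL EL"
    from contains_copy_inside_or_outside[OF this L closed'] show False
    proof
      assume "contains_copy C (induced_edges ?E' C) VL EL"
      then have "contains_copy (g ` {0..<m}) (map_edges g H) VL EL"
        using gC by (elim contains_copy_hom[where h = id]) (auto simp: induced_edges_def)
      then show False using freeH contains_copy_map_edges_iff[OF sgH g_inj] by blast
    next
      assume "contains_copy {0..<p} {e \<in> ?E'. e \<inter> C = {}} VL EL"
      then have "contains_copy {0..<p} E VL EL"
        using H'C(2) by (elim contains_copy_hom[where h = id]) auto
      with freeE show False ..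
    qed
  qed
  with sgE' show ?thesis by (simp add: L_free_graphs_def)
qed

lemma map_induced_edges_L_free:
  assumes E: "E \<in> L_free_graphs p VL EL" and C: "C \<subseteq> {0..<p}" and h: "bij_betw h C {0..<m}"
  shows "map_edges h (induced_edges E C) \<in> L_free_graphs m VL EL"
proof -
  have sgE: "simple_graph {0..<p} E" and freeE: "\<not> contains_copy {0..<p} E VL EL"
    using E by (auto simp: L_free_graphs_def)
  have sgEC: "simple_graph C (induced_edges E C)" using simple_graph_induced_edges[OF sgE C] .
  have h_inj: "inj_on h C" and hC: "h ` C = {0..<m}" using h by (auto simp: bij_betw_def)
  have "\<not> contains_copy C (induced_edges E C) VL EL"
  proof
    assume "contains_copy C (induced_edges E C) VL EL"
    then have "contains_copy {0..<p} E VL EL"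
      using C by (elim contains_copy_hom[where h = id]) (auto simp: induced_edges_def)
    with freeE show False ..
  qed
  then have "\<not> contains_copy {0..<m} (map_edges h (induced_edges E C)) VL EL"
    using contains_copy_map_edges_iff[OF sgEC h_inj, of VL EL] hC by simp
  then show ?thesis
    using simple_graph_map_edges[OF sgEC h_inj] hC by (simp add: L_free_graphs_def)
qed

lemma card_replace_induced_edges:
  assumes "finite E" "finite H" "\<And>e. e \<in> H \<Longrightarrow> e \<subseteq> C"
  shows "card ((E - induced_edges E C) \<union> H) + card (induced_edges E C) = card E + card H"
proof -
  have "card ((E - induced_edges E C) \<union> H) = card (E - induced_edges E C) + card H"
    using assms by (intro card_Un_disjoint) (auto simp: induced_edges_def)
  moreover have "card (E - induced_edges E C) + card (induced_edges E C) = card E"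
  proof -
    have "induced_edges E C \<subseteq> E" by (auto simp: induced_edges_def)
    with assms(1) show ?thesis
      by (metis card_Diff_subset card_mono finite_subset le_add_diff_inverse2)
  qed
  ultimately show ?thesis by simp
qed

lemma map_induced_edges_Ex:
  assumes E: "E \<in> Ex p VL EL" and L: "connected_graph VL EL" "simple_graph VL EL"
    and C: "C \<subseteq> {0..<p}" and closed: "\<And>e. e \<in> E \<Longrightarrow> e \<subseteq> C \<or> e \<inter> C = {}"
    and h: "bij_betw h C {0..<m}"
  shows "map_edges h (induced_edges E C) \<in> Ex m VL EL"
proof -
  let ?EC = "induced_edges E C"
  have EL: "E \<in> L_free_graphs p VL EL" and cardE: "card E = ex p VL EL"
    using E by (auto simp: Ex_def)
  have sgE: "simple_graph {0..<p} E" using EL by (simp add: L_free_graphs_def)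
  have HL: "map_edges h ?EC \<in> L_free_graphs m VL EL"
    using map_induced_edges_L_free[OF EL C h] .
  then obtain H' where "H' \<in> Ex m VL EL" using Ex_nonempty by blast
  then have H'L: "H' \<in> L_free_graphs m VL EL" and cardH': "card H' = ex m VL EL"
    by (auto simp: Ex_def)
  have sgH': "simple_graph {0..<m} H'" using H'L by (simp add: L_free_graphs_def)
  have g: "bij_betw (inv_into C h) {0..<m} C" using bij_betw_inv_into[OF h] .
  have g_inj: "inj_on (inv_into C h) {0..<m}" using g by (rule bij_betw_imp_inj_on)
  have sgG: "simple_graph C (map_edges (inv_into C h) H')"
    using simple_graph_map_edges[OF sgH' g_inj] bij_betw_imp_surj_on[OF g] by simp
  \<comment> \<open>Swap the edges inside \<open>C\<close> for a copy of an extremal graph on \<open>m\<close> vertices.\<close>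
  have "card ((E - ?EC) \<union> map_edges (inv_into C h) H') \<le> card E"
    using card_le_ex[OF replace_closed_part_L_free[OF EL L C closed g H'L]] cardE by simp
  moreover have "card ((E - ?EC) \<union> map_edges (inv_into C h) H') + card ?EC
                   = card E + card H'"
    using card_replace_induced_edges[OF simple_graph_finite_edges[OF sgE]
        simple_graph_finite_edges[OF sgG] simple_graph_edges_subset[OF sgG]]
      card_map_edges[OF sgH' g_inj] by simp
  moreover have "card (map_edges h ?EC) = card ?EC"
    using card_map_edges[OF simple_graph_induced_edges[OF sgE C] bij_betw_imp_inj_on[OF h]] .
  ultimately have "ex m VL EL \<le> card (map_edges h ?EC)" using cardH' by linarith
  with HL show ?thesis by (simp add: Ex_iff_card_ge)
qed

lemma degree_le_in_large_component:
  assumes E: "E \<in> Ex p VL EL" and L: "connected_graph VL EL" "simple_graph VL EL"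
    and large: "\<And>m H. m \<ge> n \<Longrightarrow> H \<in> Ex m VL EL \<Longrightarrow> connected_graph {0..<m} H
                  \<Longrightarrow> max_degree {0..<m} H \<le> d"
    and v: "v < p" and size: "n \<le> card (component E v)"
  shows "degree {0..<p} E v \<le> d"
proof -
  let ?C = "component E v"
  let ?m = "card ?C"
  have sgE: "simple_graph {0..<p} E" using E by (simp add: Ex_def L_free_graphs_def)
  have vV: "v \<in> {0..<p}" using v by simp
  have C: "?C \<subseteq> {0..<p}" using component_subset[OF sgE vV] .
  \<comment> \<open>\<open>Ex\<close> only speaks about graphs on \<open>{0..<m}\<close>, so the component is relabelled.\<close>
  then obtain h where h: "bij_betw h ?C {0..<?m}"
    using ex_bij_betw_finite_nat finite_subset by blast
  have h_inj: "inj_on h ?C" and hC: "h ` ?C = {0..<?m}" using h by (auto simp: bij_betw_def)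
  let ?H = "map_edges h (induced_edges E ?C)"
  have "?H \<in> Ex ?m VL EL"
    using map_induced_edges_Ex[OF E L C edge_inside_or_outside_component[OF sgE] h] .
  moreover have "connected_graph {0..<?m} ?H"
    using connected_graph_map_edges[OF connected_component[OF sgE vV], of h] hC by simp
  ultimately have "max_degree {0..<?m} ?H \<le> d" by (rule large[OF size])
  moreover have "degree {0..<p} E v = degree {0..<?m} ?H (h v)"
    using degree_map_edges[OF simple_graph_induced_edges[OF sgE C] h_inj in_component_self]
      degree_induced_component[OF sgE vV] hC by simp
  moreover have "degree {0..<?m} ?H (h v) \<le> max_degree {0..<?m} ?H"
    using hC by (intro degree_le_max_degree) auto
  ultimately show ?thesis by linarith
qed

section \<open>The lower bound: disjoint cliques\<close>

lemma div_eq_iff_bounds: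
  fixes N u b :: nat
  assumes "0 < N"
  shows "u div N = b \<longleftrightarrow> b * N \<le> u \<and> u < b * N + N"
proof
  assume "u div N = b"
  then show "b * N \<le> u \<and> u < b * N + N"
    using less_eq_div_iff_mult_less_eq[OF assms, of b u]
      div_less_iff_less_mult[OF assms, of u "b + 1"]
    by simp
next
  assume "b * N \<le> u \<and> u < b * N + N"
  then show "u div N = b" by (intro div_nat_eqI) (auto simp: mult.commute)
qed

definition block_cliques :: "nat \<Rightarrow> nat \<Rightarrow> nat set set" where
  "block_cliques N p = {{x, y} | x y. x < p \<and> y < p \<and> x \<noteq> y \<and> x div N = y div N}"

lemma simple_graph_block_cliques: "simple_graph {0..<p} (block_cliques N p)"
  unfolding simple_graph_def block_cliques_def by auto

lemma adjacent_block_cliques_iff: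
  "{u, v} \<in> block_cliques N p \<longleftrightarrow> u < p \<and> v < p \<and> u \<noteq> v \<and> u div N = v div N"
  unfolding block_cliques_def by (auto simp: doubleton_eq_iff)

lemma block_cliques_L_free:
  assumes "0 < N" and L: "connected_graph VL EL" and size: "N < card VL"
  shows "block_cliques N p \<in> L_free_graphs p VL EL"
proof -
  have "\<not> contains_copy {0..<p} (block_cliques N p) VL EL"
  proof
    assume "contains_copy {0..<p} (block_cliques N p) VL EL"
    then obtain f where f: "inj_on f VL" "\<forall>e\<in>EL. f ` e \<in> block_cliques N p"
      unfolding contains_copy_def by blast
    obtain w where w: "w \<in> VL" using L unfolding connected_graph_def by blast
    let ?b = "f w div N"
    have "f u div N = ?b" if "u \<in> VL" for u
    proof (rule connected_graph_invariant[OF L that w])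
      fix x y assume "{x, y} \<in> EL"
      then have "{f x, f y} \<in> block_cliques N p" using f(2) by force
      then show "f x div N = f y div N" by (simp add: adjacent_block_cliques_iff)
    qed
    then have "f ` VL \<subseteq> {?b * N..<?b * N + N}" using div_eq_iff_bounds[OF \<open>0 < N\<close>] by auto
    then have "card (f ` VL) \<le> N" using card_mono[of "{?b * N..<?b * N + N}"] by fastforce
    with size card_image[OF f(1)] show False by simp
  qed
  then show ?thesis using simple_graph_block_cliques by (simp add: L_free_graphs_def)
qed

lemma degree_block_cliques:
  assumes N: "0 < N" and p: "p = k * N + r" and r: "r < N" and v: "v < p"
  shows "degree {0..<p} (block_cliques N p) v = (if v < k * N then N - 1 else r - 1)"
proof -
  have d: "degree {0..<p} (block_cliques N p) v = card ({u. u < p \<and> u div N = v div N} - {v})"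
    unfolding degree_def using v
    by (intro arg_cong[where f = card]) (auto simp: adjacent_block_cliques_iff)
  show ?thesis
  proof (cases "v < k * N")
    case True
    define b where "b = v div N"
    have "b < k" using True div_less_iff_less_mult[OF N, of v k] by (simp add: b_def)
    then have "b * N + N \<le> k * N" by (metis Suc_leI add.commute mult_Suc mult_le_mono1)
    then have "{u. u < p \<and> u div N = b} = {b * N..<b * N + N}"
      using div_eq_iff_bounds[OF N] p by auto
    moreover have "v \<in> {b * N..<b * N + N}" using div_eq_iff_bounds[OF N] b_def by auto
    ultimately show ?thesis using d True by (simp add: b_def)
  next
    case False
    have "v div N = k" using False v p r div_eq_iff_bounds[OF N, of v k] by auto
    moreover have "{u. u < p \<and> u div N = k} = {k * N..<p}" using div_eq_iff_bounds[OF N] p r by auto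
    moreover have "v \<in> {k * N..<p}" using False v by auto
    ultimately show ?thesis using d False p by simp
  qed
qed

lemma card_block_cliques:
  assumes N: "0 < N" and p: "p = k * N + r" and r: "r < N"
  shows "2 * card (block_cliques N p) = k * N * (N - 1) + r * (r - 1)"
proof -
  let ?d = "\<lambda>v. if v < k * N then N - 1 else r - 1"
  have "2 * card (block_cliques N p) = (\<Sum>v\<in>{0..<p}. degree {0..<p} (block_cliques N p) v)"
    using handshake[OF simple_graph_block_cliques] by simp
  also have "\<dots> = (\<Sum>v\<in>{0..<p}. ?d v)"
    using degree_block_cliques[OF N p r] by simp
  also have "{0..<p} = {0..<k * N} \<union> {k * N..<p}" using p by auto
  also have "(\<Sum>v\<in>{0..<k * N} \<union> {k * N..<p}. ?d v) = (\<Sum>v\<in>{0..<k * N}. ?d v) + (\<Sum>v\<in>{k * N..<p}. ?d v)"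
    by (rule sum.union_disjoint) auto
  also have "\<dots> = k * N * (N - 1) + r * (r - 1)" using p by simp
  finally show ?thesis .
qed

lemma ex_lower_bound:
  assumes "connected_graph VL EL" "card VL = n" "2 \<le> n"
    and "p = k * (n - 1) + r" "r \<le> n - 2"
  shows "(real (n - 2) * real p - real r * real (n - 1 - r)) / 2 \<le> real (ex p VL EL)"
proof -
  define N where "N = n - 1"
  have N: "0 < N" "r < N" "N < card VL" using assms by (auto simp: N_def)
  have p: "p = k * N + r" using assms(4) by (simp add: N_def)
  have "card (block_cliques N p) \<le> ex p VL EL"
    by (intro card_le_ex block_cliques_L_free N(1,3) assms(1))
  then have "k * N * (N - 1) + r * (r - 1) \<le> 2 * ex p VL EL"
    using card_block_cliques[OF N(1) p N(2)] by linarith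
  moreover have "real (r * (r - 1)) = real r * (real r - 1)" by (cases r) (auto simp: algebra_simps)
  moreover have "real (N - 1) = real N - 1" using N by (simp add: of_nat_diff)
  ultimately have low:
      "real k * real N * (real N - 1) + real r * (real r - 1) \<le> 2 * real (ex p VL EL)"
    by (metis of_nat_add of_nat_le_iff of_nat_mult of_nat_numeral)
  have "real (n - 2) = real N - 1" "real (n - 1 - r) = real N - real r"
    "real p = real k * real N + real r"
    using N p by (auto simp: N_def of_nat_diff)
  then show ?thesis using low by (simp only:) (simp add: algebra_simps)
qed

section \<open>The upper bound: counting degree deficits\<close>

definition quadratic_defect :: "nat \<Rightarrow> nat \<Rightarrow> int" where
  "quadratic_defect N c = int c * (int N - int c)"

text \<open>
  With \<open>N = n - 1\<close>, \<open>component_defect N c\<close> bounds from below the total deficit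
  \<open>\<Sum>v. (N - 1) - deg v\<close> of a component with \<open>c\<close> vertices in an extremal graph.
\<close>

definition component_defect :: "nat \<Rightarrow> nat \<Rightarrow> int" where
  "component_defect N c = (if N < c then 2 * int c else quadratic_defect N c)"

lemma quadratic_defect_nonneg: "c \<le> N \<Longrightarrow> 0 \<le> quadratic_defect N c"
  by (simp add: quadratic_defect_def)

lemma quadratic_defect_mod_add_le:
  assumes "0 < N"
  shows "quadratic_defect N ((a + b) mod N)
           \<le> quadratic_defect N (a mod N) + quadratic_defect N (b mod N)"
proof -
  define x where "x = a mod N"
  define y where "y = b mod N"
  have x: "x < N" and y: "y < N" using assms by (auto simp: x_def y_def)
  have ab: "(a + b) mod N = (x + y) mod N" by (simp add: x_def y_def mod_add_eq)
  show ?thesis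
  proof (cases "x + y < N")
    case True
    then have "quadratic_defect N ((a + b) mod N) =
        quadratic_defect N x + quadratic_defect N y - 2 * (int x * int y)"
      using ab by (simp add: quadratic_defect_def algebra_simps)
    then show ?thesis by (simp add: x_def y_def)
  next
    case False
    then have "(a + b) mod N = x + y - N" using ab x y by (simp add: le_mod_geq)
    with False have "quadratic_defect N ((a + b) mod N) =
        quadratic_defect N x + quadratic_defect N y - 2 * ((int N - int x) * (int N - int y))"
      by (simp add: quadratic_defect_def of_nat_diff algebra_simps)
    moreover have "0 \<le> (int N - int x) * (int N - int y)" using x y by simp
    ultimately show ?thesis by (simp add: x_def y_def)
  qed
qed

lemma quadratic_defect_mod_sum_le:
  assumes "0 < N" "finite S"
  shows "quadratic_defect N ((\<Sum>x\<in>S. s x) mod N) \<le> (\<Sum>x\<in>S. quadratic_defect N (s x mod N))"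
  using assms(2)
proof (induction S rule: finite_induct)
  case empty
  then show ?case by (simp add: quadratic_defect_def)
next
  case (insert x F)
  then show ?case
    using quadratic_defect_mod_add_le[OF assms(1), of "s x" "\<Sum>x\<in>F. s x"] by simp
qed

lemma quadratic_defect_after_large_part:
  assumes "0 < N" "N < B" "(B + T) mod N = r"
  shows "2 * (int N + int r) \<le> 2 * int B + quadratic_defect N (T mod N)"
proof (cases "N + r \<le> B")
  case True
  moreover have "0 \<le> quadratic_defect N (T mod N)"
    using assms(1) by (intro quadratic_defect_nonneg) (simp add: order_less_imp_le)
  ultimately show ?thesis by simp
next
  case False
  define u where "u = B - N"
  have u: "0 < u" "u < r" "B = N + u" using assms(2) False by (auto simp: u_def)
  have r: "r < N" using assms(1,3) by auto
  have "(u + T mod N) mod N = r" using assms(3) u(3) by (simp add: mod_add_right_eq add.assoc)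
  moreover have t: "T mod N < N" using assms(1) by simp
  ultimately have T: "T mod N = r - u"
  proof (cases "u + T mod N < N")
    case False
    moreover have "u + T mod N - N < N" using t u r by linarith
    ultimately have "(u + T mod N) mod N = u + T mod N - N" by (simp add: le_mod_geq)
    with \<open>(u + T mod N) mod N = r\<close> t u(2) show ?thesis by linarith
  qed simp
  have "2 \<le> int N - int (r - u)" using u r by linarith
  then have "int (r - u) * 2 \<le> int (r - u) * (int N - int (r - u))" by (rule mult_left_mono) simp
  then have "2 * int (r - u) \<le> quadratic_defect N (r - u)" by (simp add: quadratic_defect_def)
  then show ?thesis using u T by (simp add: of_nat_diff)
qed

lemma sum_component_defect_ge:
  assumes "0 < N" "finite S" "(\<Sum>x\<in>S. s x) mod N = r"
  shows "min (2 * (int N + int r)) (quadratic_defect N r) \<le> (\<Sum>x\<in>S. component_defect N (s x))"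
proof -
  let ?L = "S \<inter> {x. N < s x}" and ?M = "S - {x. N < s x}"
  have split: "sum g S = sum g ?L + sum g ?M" for g :: "'a \<Rightarrow> 'b::comm_monoid_add"
    using assms(2) by (rule sum.Int_Diff)
  define B where "B = (\<Sum>x\<in>?L. s x)"
  define T where "T = (\<Sum>x\<in>?M. s x)"
  have BT: "(B + T) mod N = r" using assms(3) split[of s] by (simp add: B_def T_def)
  have "(\<Sum>x\<in>?L. component_defect N (s x)) = 2 * int B"
    by (simp add: B_def component_defect_def sum_distrib_left)
  moreover have "(\<Sum>x\<in>?M. component_defect N (s x)) = (\<Sum>x\<in>?M. quadratic_defect N (s x mod N))"
  proof (rule sum.cong)
    fix x assume "x \<in> ?M"
    then show "component_defect N (s x) = quadratic_defect N (s x mod N)"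
      by (cases "s x = N") (auto simp: component_defect_def quadratic_defect_def)
  qed simp
  ultimately have total:
      "2 * int B + quadratic_defect N (T mod N) \<le> (\<Sum>x\<in>S. component_defect N (s x))"
    using split[of "\<lambda>x. component_defect N (s x)"]
      quadratic_defect_mod_sum_le[OF assms(1), of ?M s] assms(2) by (simp add: T_def)
  show ?thesis
  proof (cases "?L = {}")
    case True
    then have "T mod N = r" using BT by (simp add: B_def)
    with True total show ?thesis by (simp add: B_def)
  next
    case False
    then obtain x where "x \<in> ?L" by blast
    then have "N < B"
      unfolding B_def using assms(2) member_le_sum[of x ?L s] by fastforce
    from quadratic_defect_after_large_part[OF assms(1) this BT] total show ?thesis by linarith
  qed
qed

lemma component_defect_le_deficit:
  assumes E: "E \<in> Ex p VL EL" and L: "connected_graph VL EL" "simple_graph VL EL"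
    and large: "\<And>m H. m \<ge> n \<Longrightarrow> H \<in> Ex m VL EL \<Longrightarrow> connected_graph {0..<m} H
                  \<Longrightarrow> max_degree {0..<m} H \<le> n - 4"
    and n: "4 \<le> n" and v: "v < p"
  shows "component_defect (n - 1) (card (component E v))
           \<le> (\<Sum>u\<in>component E v. int (n - 2) - int (degree {0..<p} E u))"
proof -
  let ?C = "component E v"
  have sgE: "simple_graph {0..<p} E" using E by (simp add: Ex_def L_free_graphs_def)
  have C: "?C \<subseteq> {0..<p}" using component_subset[OF sgE] v by simp
  have same: "component E u = ?C" if "u \<in> ?C" for u using component_eq[OF that] .
  show ?thesis
  proof (cases "n - 1 < card ?C")
    case True
    have "2 \<le> int (n - 2) - int (degree {0..<p} E u)" if "u \<in> ?C" for u
    proof -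
      have size: "n \<le> card (component E u)" using True unfolding same[OF that] by simp
      have "u < p" using C that by auto
      have "degree {0..<p} E u \<le> n - 4"
        using E L large \<open>u < p\<close> size by (rule degree_le_in_large_component)
      then show ?thesis using n by linarith
    qed
    then have "(\<Sum>u\<in>?C. 2) \<le> (\<Sum>u\<in>?C. int (n - 2) - int (degree {0..<p} E u))"
      by (rule sum_mono)
    then show ?thesis using True by (simp add: component_defect_def)
  next
    case False
    have "0 < card ?C"
      using finite_subset[OF C] in_component_self[of v E] card_gt_0_iff by blast
    have "int (n - 1) - int (card ?C) \<le> int (n - 2) - int (degree {0..<p} E u)" if "u \<in> ?C" for u
    proof -
      have "u \<in> {0..<p}" using C that by blast
      then have "degree {0..<p} E u \<le> card (component E u) - 1"
        by (rule degree_le_card_component[OF sgE])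
      then have "degree {0..<p} E u \<le> card ?C - 1" unfolding same[OF that] .
      then show ?thesis using \<open>0 < card ?C\<close> n by linarith
    qed
    then have "(\<Sum>u\<in>?C. int (n - 1) - int (card ?C))
                 \<le> (\<Sum>u\<in>?C. int (n - 2) - int (degree {0..<p} E u))"
      by (rule sum_mono)
    then show ?thesis using False by (simp add: component_defect_def quadratic_defect_def)
  qed
qed

lemma ex_upper_bound_int:
  assumes L: "connected_graph VL EL" "simple_graph VL EL" "EL \<noteq> {}"
    and large: "\<And>m H. m \<ge> n \<Longrightarrow> H \<in> Ex m VL EL \<Longrightarrow> connected_graph {0..<m} H
                  \<Longrightarrow> max_degree {0..<m} H \<le> n - 4"
    and n: "4 \<le> n" and p: "p mod (n - 1) = r"
  shows "2 * int (ex p VL EL) + min (2 * (int (n - 1) + int r)) (quadratic_defect (n - 1) r)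
           \<le> int (n - 2) * int p"
proof -
  obtain E where E: "E \<in> Ex p VL EL"
    using Ex_nonempty empty_in_L_free_graphs[OF L(3)] by blast
  have sgE: "simple_graph {0..<p} E" and cardE: "card E = ex p VL EL"
    using E by (auto simp: Ex_def L_free_graphs_def)
  let ?D = "\<lambda>u. int (n - 2) - int (degree {0..<p} E u)"
  let ?CS = "component E ` {0..<p}"
  have "(\<Sum>C\<in>?CS. card C) = p"
    using sum_over_components[OF sgE, of "\<lambda>_. 1 :: nat"] by simp
  then have "min (2 * (int (n - 1) + int r)) (quadratic_defect (n - 1) r)
               \<le> (\<Sum>C\<in>?CS. component_defect (n - 1) (card C))"
    using n p by (intro sum_component_defect_ge) auto
  also have "\<dots> \<le> (\<Sum>C\<in>?CS. \<Sum>u\<in>C. ?D u)"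
    using component_defect_le_deficit[OF E L(1,2) large n] by (intro sum_mono) auto
  also have "\<dots> = (\<Sum>u\<in>{0..<p}. ?D u)"
    by (rule sum_over_components[OF sgE, symmetric])
  also have "\<dots> = int (n - 2) * int p - 2 * int (ex p VL EL)"
    using handshake[OF sgE] cardE by (simp add: sum_subtractf flip: of_nat_sum)
  finally show ?thesis by simp
qed

lemma ex_upper_bound:
  assumes L: "connected_graph VL EL" "simple_graph VL EL" "EL \<noteq> {}"
    and large: "\<And>m H. m \<ge> n \<Longrightarrow> H \<in> Ex m VL EL \<Longrightarrow> connected_graph {0..<m} H
                  \<Longrightarrow> max_degree {0..<m} H \<le> n - 4"
    and n: "4 \<le> n" and p: "p = k * (n - 1) + r" "r < n - 1"
  shows "real (ex p VL EL) \<le> real (n - 2) * real p / 2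
           - min (real (n - 1 + r)) (real r * real (n - 1 - r) / 2)"
proof -
  have "p mod (n - 1) = r" using p by simp
  from ex_upper_bound_int[OF L large n this]
  have "real_of_int
          (2 * int (ex p VL EL) + min (2 * (int (n - 1) + int r)) (quadratic_defect (n - 1) r))
          \<le> real_of_int (int (n - 2) * int p)"
    by (simp only: of_int_le_iff)
  moreover have "quadratic_defect (n - 1) r = int r * int (n - 1 - r)"
    using p(2) by (simp add: quadratic_defect_def of_nat_diff)
  ultimately have "2 * real (ex p VL EL)
                     + min (2 * (real (n - 1) + real r)) (real r * real (n - 1 - r))
                     \<le> real (n - 2) * real p"
    by (simp add: of_int_min)
  moreover have "2 * min (real (n - 1 + r)) (real r * real (n - 1 - r) / 2)
                   = min (2 * (real (n - 1) + real r)) (real r * real (n - 1 - r))"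
    by (simp add: min_def)
  ultimately show ?thesis by linarith
qed

lemma quadratic_le_linear_for_extreme_r:
  fixes n r :: nat
  assumes "r \<in> {0, 1, 2, n - 5, n - 4, n - 3, n - 2}"
  shows "r * (n - 1 - r) \<le> 2 * (n - 1 + r)"
  using assms by (auto simp: algebra_simps)

theorem lemma2p8:
  fixes n k r p :: nat and VT :: "'a set" and ET :: "'a set set"
  assumes "n \<ge> 10"
    and "is_tree VT ET" and "card VT = n"
    and "max_degree VT ET = n - 4"
    and "\<And>m H. m \<ge> n \<Longrightarrow> H \<in> Ex m VT ET \<Longrightarrow> connected_graph {0..<m} H
            \<Longrightarrow> max_degree {0..<m} H \<le> n - 4"
    and "p = k * (n - 1) + r" and "r \<le> n - 2" and "p \<ge> n - 1"
  shows "(real (n - 2) * real p - real r * real (n - 1 - r)) / 2 \<le> real (ex p VT ET)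
       \<and> real (ex p VT ET) \<le> real (n - 2) * real p / 2
            - min (real (n - 1 + r)) (real r * real (n - 1 - r) / 2)
       \<and> (r \<in> {0, 1, 2, n - 5, n - 4, n - 3, n - 2} \<longrightarrow>
            real (ex p VT ET) = (real (n - 2) * real p - real r * real (n - 1 - r)) / 2)"
proof -
  have T: "simple_graph VT ET" "connected_graph VT ET" "ET \<noteq> {}"
    using assms(1-3) by (auto simp: is_tree_def)
  have lower: "(real (n - 2) * real p - real r * real (n - 1 - r)) / 2 \<le> real (ex p VT ET)"
    using ex_lower_bound[OF T(2) assms(3)] assms(1,6,7) by simp
  have upper: "real (ex p VT ET) \<le> real (n - 2) * real p / 2
                 - min (real (n - 1 + r)) (real r * real (n - 1 - r) / 2)"
    using ex_upper_bound[OF T(2,1,3) assms(5)] assms(1,6,7) by simp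
  have "min (real (n - 1 + r)) (real r * real (n - 1 - r) / 2) = real r * real (n - 1 - r) / 2"
    if "r \<in> {0, 1, 2, n - 5, n - 4, n - 3, n - 2}"
    using quadratic_le_linear_for_extreme_r[OF that] by (simp flip: of_nat_mult of_nat_le_iff)
  with lower upper show ?thesis by (auto simp: diff_divide_distrib)
qed

end
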